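(* Let $\mathbf{P}=\{p_n(x)\}_{n\ge0}$ be a sequence of complex polynomials with $\deg p_n=n$, $p_0=1$, and $p_n(0)=0$ for all $n\ge1$. Then for $n\ge1$ and $1\le k\le n$, $$S_2(n,k;\mathbf{P})=\frac{1}{k!}\sum_{j=1}^{k}\binom{n-j}{k-j}A_{n,j-1}(\mathbf{P}).$$
   Context: $S_2(n,k;\mathbf{P})$ is defined by $p_n(x)=\sum_{k=0}^{n}S_2(n,k;\mathbf{P})(x)_k$, with $(x)_0=1$, $(x)_k=x(x-1)\cdots(x-k+1)$. The Eulerian numbers $A_{n,k}(\mathbf{P})$ ($0\le k\le n$) are the unique coefficients with $p_n(x)=\sum_{k=0}^{n}A_{n,k}(\mathbf{P})\binom{x+n-k-1}{n}$, where $\binom{y}{n}=y(y-1)\cdots(y-n+1)/n!$. *)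

theory Defs
  imports "HOL-Computational_Algebra.Polynomial"
begin

definition falling_poly :: "nat \<Rightarrow> complex poly" where
  "falling_poly k = (\<Prod>i<k. [:- of_nat i, 1:])"

text \<open>The binomial polynomial binom(x+n-k-1, n) = (x+n-k-1)(x+n-k-2)...(x-k)/n!.\<close>
definition binom_poly :: "nat \<Rightarrow> nat \<Rightarrow> complex poly" where
  "binom_poly n k = smult (1 / fact n)
     (\<Prod>i<n. [: of_int (int n - int k - 1 - int i), 1 :])"

definition S2 :: "(nat \<Rightarrow> complex poly) \<Rightarrow> nat \<Rightarrow> nat \<Rightarrow> complex" where
  "S2 P n = (THE c. (\<forall>k>n. c k = 0) \<and>
                    P n = (\<Sum>k\<le>n. smult (c k) (falling_poly k)))"

definition eulerA :: "(nat \<Rightarrow> complex poly) \<Rightarrow> nat \<Rightarrow> nat \<Rightarrow> complex" where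
  "eulerA P n = (THE c. (\<forall>k>n. c k = 0) \<and>
                    P n = (\<Sum>k\<le>n. smult (c k) (binom_poly n k)))"

end

theory Submission
  imports Defs "HOL-Computational_Algebra.Formal_Power_Series"
begin

text \<open>Every polynomial of degree at most n is a combination of the binomials
  binom(x + n - k - 1, n), k = 0, ..., n: peel off the top coefficient and use Pascal's rule.
  The coefficients A_{n,k} are unique because evaluation at x = 1, ..., n + 1 gives a triangular
  system, and p_n(0) = 0 forces A_{n,n} = 0. Expanding each remaining binomial by Vandermonde's
  convolution binom(x + n - j - 1, n) = sum_k binom(n - j - 1, n - k) binom(x, k), with
  (x)_k = k! binom(x, k), and comparing coefficients in the falling factorial basis gives the
  formula after the symmetry binom(n - j - 1, n - k) = binom(n - j - 1, k - j - 1).\<close>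

definition binomial_shift_poly :: "nat \<Rightarrow> 'a::field_char_0 \<Rightarrow> 'a poly" where
  "binomial_shift_poly m a = smult (1 / fact m) (\<Prod>i<m. [:a - of_nat i, 1:])"

lemma poly_binomial_shift_poly: "poly (binomial_shift_poly m a) x = (x + a) gchoose m"
  unfolding binomial_shift_poly_def
  by (simp add: poly_prod gbinomial_prod_rev lessThan_atLeast0 algebra_simps)

lemma binomial_shift_poly_pascal:
  "binomial_shift_poly (Suc m) a - binomial_shift_poly (Suc m) (a - 1) = binomial_shift_poly m (a - 1)"
proof (rule poly_ext)
  fix x :: 'a
  show "poly (binomial_shift_poly (Suc m) a - binomial_shift_poly (Suc m) (a - 1)) x =
        poly (binomial_shift_poly m (a - 1)) x"
    using gbinomial_Suc_Suc[of "x + (a - 1)" m] by (simp add: poly_binomial_shift_poly algebra_simps)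
qed

lemma degree_binomial_shift_poly: "degree (binomial_shift_poly m a) = m"
  unfolding binomial_shift_poly_def by (simp add: degree_prod_eq_sum_degree)

lemma lead_coeff_binomial_shift_poly: "coeff (binomial_shift_poly m a) m = 1 / fact m"
proof -
  have "lead_coeff (\<Prod>i<m. [:a - of_nat i, 1:]) = 1"
    by (simp add: lead_coeff_prod)
  then show ?thesis
    unfolding binomial_shift_poly_def by (simp add: degree_prod_eq_sum_degree)
qed

interpretation poly_module: module "smult :: 'a::comm_ring_1 \<Rightarrow> 'a poly \<Rightarrow> 'a poly"
  by unfold_locales (simp_all add: smult_add_right smult_add_left)

lemma (in module) span_image_imp_sum:
  assumes "finite A" and "x \<in> span (f ` A)"
  shows "\<exists>c. x = (\<Sum>j\<in>A. c j *s f j)"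
  using assms(2)
proof (induction rule: span_induct_alt)
  case base
  show ?case by (rule exI[of _ "\<lambda>_. 0"]) simp
next
  case (step r y z)
  then obtain i c where i: "i \<in> A" "y = f i" and z: "z = (\<Sum>j\<in>A. c j *s f j)"
    by blast
  have "(\<Sum>j\<in>A. (if j = i then r else 0) *s f j) = (\<Sum>j\<in>A. if j = i then r *s f j else 0)"
    by (rule sum.cong) auto
  then have "r *s y + z = (\<Sum>j\<in>A. (c j + (if j = i then r else 0)) *s f j)"
    using i assms(1) by (simp add: z scale_left_distrib sum.distrib)
  then show ?case by (intro exI[of _ "\<lambda>j. c j + (if j = i then r else 0)"])
qed

text \<open>Pascal's rule exhibits binom(x + a - 1 - j, m) as the difference of two binomials of
  degree m + 1, so only the top coefficient has to be removed by hand.\<close>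

lemma degree_le_in_span_binomial_shift_polys:
  "degree p \<le> m \<Longrightarrow> p \<in> poly_module.span ((\<lambda>j. binomial_shift_poly m (a - of_nat j)) ` {..m})"
proof (induction m arbitrary: p a)
  case 0
  then have "p = smult (coeff p 0) (binomial_shift_poly 0 (a - of_nat 0))"
    by (simp add: binomial_shift_poly_def degree_0_id)
  then show ?case
    by (metis poly_module.span_base poly_module.span_scale atMost_iff image_eqI order_refl)
next
  case (Suc m)
  let ?span = "poly_module.span ((\<lambda>j. binomial_shift_poly (Suc m) (a - of_nat j)) ` {..Suc m})"
  define r where "r = coeff p (Suc m) * fact (Suc m)"
  define q where "q = p - smult r (binomial_shift_poly (Suc m) a)"
  have "coeff q (Suc m) = 0"
    by (simp add: q_def r_def lead_coeff_binomial_shift_poly del: fact_Suc)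
  moreover have "degree q \<le> Suc m"
    using Suc.prems unfolding q_def
    by (metis degree_binomial_shift_poly degree_diff_le degree_smult_le)
  ultimately have "degree q \<le> m"
    by (metis antisym_conv2 coeff_eq_0 degree_le less_Suc_eq_le linorder_not_le)
  then have q_span: "q \<in> poly_module.span ((\<lambda>j. binomial_shift_poly m (a - 1 - of_nat j)) ` {..m})"
    by (rule Suc.IH)
  have "binomial_shift_poly m (a - 1 - of_nat j) \<in> ?span" if "j \<le> m" for j
  proof -
    have "binomial_shift_poly m (a - 1 - of_nat j) =
      binomial_shift_poly (Suc m) (a - of_nat j) - binomial_shift_poly (Suc m) (a - of_nat (Suc j))"
      using binomial_shift_poly_pascal[of m "a - of_nat j"] by (simp add: algebra_simps)
    moreover have "binomial_shift_poly (Suc m) (a - of_nat i) \<in> ?span" if "i \<le> Suc m" for i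
      using that by (intro poly_module.span_base) auto
    moreover have "j \<le> Suc m" "Suc j \<le> Suc m"
      using that by simp_all
    ultimately show ?thesis
      by (simp only: poly_module.span_diff)
  qed
  then have "poly_module.span ((\<lambda>j. binomial_shift_poly m (a - 1 - of_nat j)) ` {..m}) \<subseteq> ?span"
    by (intro poly_module.span_minimal) auto
  with q_span have "q \<in> ?span"
    by (rule rev_subsetD)
  moreover have "smult r (binomial_shift_poly (Suc m) a) \<in> ?span"
    by (rule poly_module.span_scale, rule poly_module.span_base) (auto intro: image_eqI[of _ _ 0])
  ultimately show ?case
    unfolding q_def by (metis diff_add_cancel poly_module.span_add)
qed

lemma binom_poly_eq_binomial_shift_poly:
  "binom_poly n k = binomial_shift_poly n (of_int (int n - 1) - of_nat k)"
  unfolding binom_poly_def binomial_shift_poly_def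
  by (intro arg_cong[where f = "smult _"] prod.cong) simp_all

lemma binom_poly_expansion_exists:
  assumes "degree p \<le> n"
  shows "\<exists>c. p = (\<Sum>k\<le>n. smult (c k) (binom_poly n k))"
  using poly_module.span_image_imp_sum[OF _ degree_le_in_span_binomial_shift_polys[OF assms]]
  by (simp add: binom_poly_eq_binomial_shift_poly)

lemma sum_smult_eq_0_triangular:
  fixes b :: "nat \<Rightarrow> 'a::idom poly"
  assumes sum: "(\<Sum>k\<le>n. smult (c k) (b k)) = 0"
    and upper: "\<And>i k. i < k \<Longrightarrow> k \<le> n \<Longrightarrow> poly (b k) (x i) = 0"
    and diag: "\<And>i. i \<le> n \<Longrightarrow> poly (b i) (x i) \<noteq> 0"
  shows "i \<le> n \<Longrightarrow> c i = 0"
proof (induction i rule: less_induct)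
  case (less i)
  have "0 = (\<Sum>k\<le>n. c k * poly (b k) (x i))"
    using arg_cong[OF sum, of "\<lambda>p. poly p (x i)"] by (simp add: poly_sum)
  also have "\<dots> = (\<Sum>k\<in>{i}. c k * poly (b k) (x i))"
  proof (rule sum.mono_neutral_right)
    show "\<forall>k\<in>{..n} - {i}. c k * poly (b k) (x i) = 0"
      using less upper by (auto simp: neq_iff)
  qed (use less in auto)
  finally show ?case
    using diag[OF less.prems] by simp
qed

lemma the_triangular_coefficients_eqI:
  fixes b :: "nat \<Rightarrow> 'a::idom poly"
  assumes upper: "\<And>i k. i < k \<Longrightarrow> k \<le> n \<Longrightarrow> poly (b k) (x i) = 0"
    and diag: "\<And>i. i \<le> n \<Longrightarrow> poly (b i) (x i) \<noteq> 0"
    and p: "p = (\<Sum>k\<le>n. smult (s k) (b k))" and s: "\<forall>k>n. s k = 0"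
  shows "(THE c. (\<forall>k>n. c k = 0) \<and> p = (\<Sum>k\<le>n. smult (c k) (b k))) = s"
proof (rule the_equality)
  fix c assume c: "(\<forall>k>n. c k = 0) \<and> p = (\<Sum>k\<le>n. smult (c k) (b k))"
  have "(\<Sum>k\<le>n. smult (c k - s k) (b k)) = 0"
    using c p by (simp add: smult_diff_left sum_subtractf)
  then have "c k - s k = 0" if "k \<le> n" for k
    by (rule sum_smult_eq_0_triangular[where c = "\<lambda>k. c k - s k", OF _ upper diag that])
  with c s show "c = s"
    by (metis eq_iff_diff_eq_0 ext linorder_not_le)
qed (use p s in simp)

lemma poly_falling_poly: "poly (falling_poly k) x = fact k * (x gchoose k)"
  unfolding falling_poly_def gbinomial_mult_fact
  by (simp add: poly_prod lessThan_atLeast0)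

lemma poly_binom_poly: "poly (binom_poly n k) x = (x + of_int (int n - int k - 1)) gchoose n"
  by (simp add: binom_poly_eq_binomial_shift_poly poly_binomial_shift_poly algebra_simps)

lemma poly_binom_poly_of_nat:
  assumes "k \<le> n"
  shows "poly (binom_poly n k) (of_nat (Suc i)) = of_nat ((n + i - k) choose n)"
proof -
  have "(of_nat (Suc i) :: complex) + of_int (int n - int k - 1) = of_nat (n + i - k)"
    using assms by (simp add: of_nat_diff)
  then show ?thesis by (simp add: poly_binom_poly binomial_gbinomial)
qed

lemma poly_binom_poly_0:
  assumes "k \<le> n"
  shows "poly (binom_poly n k) 0 = (if k = n then (-1) ^ n else 0)"
proof (cases "k = n")
  case True
  then show ?thesis
    using gbinomial_minus[of "1 :: complex" n] by (simp add: poly_binom_poly flip: binomial_gbinomial)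
next
  case False
  then have "of_int (int n - int k - 1) = (of_nat (n - k - 1) :: complex)"
    using assms by (simp add: of_nat_diff)
  then have "poly (binom_poly n k) 0 = of_nat ((n - k - 1) choose n)"
    unfolding poly_binom_poly binomial_gbinomial by simp
  with False assms show ?thesis
    by (simp add: binomial_eq_0)
qed

lemma S2_eqI:
  assumes "P n = (\<Sum>k\<le>n. smult (s k) (falling_poly k))" and "\<forall>k>n. s k = 0"
  shows "S2 P n = s"
  unfolding S2_def
  by (rule the_triangular_coefficients_eqI[where x = of_nat, OF _ _ assms])
     (auto simp: poly_falling_poly binomial_gbinomial[symmetric] binomial_eq_0)

lemma eulerA_eqI:
  assumes "P n = (\<Sum>k\<le>n. smult (s k) (binom_poly n k))" and "\<forall>k>n. s k = 0"
  shows "eulerA P n = s"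
  unfolding eulerA_def
  by (rule the_triangular_coefficients_eqI[where x = "\<lambda>i. of_nat (Suc i)", OF _ _ assms])
     (auto simp: poly_binom_poly_of_nat binomial_eq_0 simp del: of_nat_Suc)

lemma eulerA_expansion:
  assumes "degree (P n) \<le> n"
  shows "P n = (\<Sum>k\<le>n. smult (eulerA P n k) (binom_poly n k))" and "\<forall>k>n. eulerA P n k = 0"
proof -
  obtain c where c: "P n = (\<Sum>k\<le>n. smult (c k) (binom_poly n k))"
    using binom_poly_expansion_exists[OF assms] by blast
  define s where "s k = (if k \<le> n then c k else 0)" for k
  have "P n = (\<Sum>k\<le>n. smult (s k) (binom_poly n k))"
    unfolding c s_def by (rule sum.cong) simp_all
  moreover have "\<forall>k>n. s k = 0"
    by (simp add: s_def)
  ultimately show "P n = (\<Sum>k\<le>n. smult (eulerA P n k) (binom_poly n k))" "\<forall>k>n. eulerA P n k = 0"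
    using eulerA_eqI by simp_all
qed

lemma eulerA_eq_0_if_ge:
  assumes "degree (P n) \<le> n" and "poly (P n) 0 = 0" and "n \<le> j"
  shows "eulerA P n j = 0"
proof (cases "j = n")
  case True
  have "0 = poly (P n) 0"
    using assms(2) by simp
  also have "\<dots> = (\<Sum>k\<le>n. eulerA P n k * (if k = n then (-1) ^ n else 0))"
    by (subst eulerA_expansion(1)[of P n, OF assms(1)]) (simp add: poly_sum poly_binom_poly_0)
  also have "\<dots> = eulerA P n n * (-1) ^ n"
    by (simp add: if_distrib[of "(*) _"] cong: if_cong)
  finally show ?thesis
    using True by simp
qed (use eulerA_expansion(2)[of P n, OF assms(1)] assms(3) in auto)

lemma binom_poly_falling_expansion:
  assumes "j < n"
  shows "binom_poly n j =
    (\<Sum>k\<le>n. smult (of_nat ((n - j - 1) choose (n - k)) / fact k) (falling_poly k))"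
proof (rule poly_ext)
  fix x :: complex
  have "poly (binom_poly n j) x = (x + of_nat (n - j - 1)) gchoose n"
    using assms by (simp add: poly_binom_poly of_nat_diff algebra_simps)
  also have "\<dots> = (\<Sum>k\<le>n. (of_nat (n - j - 1) gchoose (n - k)) * (x gchoose k))"
    using gbinomial_Vandermonde[of x "of_nat (n - j - 1)" n]
    by (simp add: atMost_atLeast0 mult.commute)
  finally show "poly (binom_poly n j) x =
      poly (\<Sum>k\<le>n. smult (of_nat ((n - j - 1) choose (n - k)) / fact k) (falling_poly k)) x"
    by (simp add: poly_sum poly_falling_poly binomial_gbinomial)
qed

lemma sum_choose_reindex:
  fixes c :: "nat \<Rightarrow> 'a::comm_semiring_1"
  assumes "k \<le> n"
  shows "(\<Sum>j<n. c j * of_nat ((n - j - 1) choose (n - k))) =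
    (\<Sum>j=1..k. of_nat ((n - j) choose (k - j)) * c (j - 1))"
proof -
  have "(\<Sum>j<n. c j * of_nat ((n - j - 1) choose (n - k))) =
      (\<Sum>j<k. c j * of_nat ((n - j - 1) choose (n - k)))"
    using assms by (intro sum.mono_neutral_right) (auto simp: binomial_eq_0)
  also have "\<dots> = (\<Sum>j<k. of_nat ((n - Suc j) choose (k - Suc j)) * c j)"
  proof (rule sum.cong)
    fix j assume "j \<in> {..<k}"
    then have "(n - Suc j) choose (k - Suc j) = (n - j - 1) choose (n - k)"
      using assms binomial_symmetric[of "k - Suc j" "n - Suc j"] by simp
    then show "c j * of_nat ((n - j - 1) choose (n - k)) =
        of_nat ((n - Suc j) choose (k - Suc j)) * c j"
      by (simp add: mult.commute)
  qed simp
  also have "\<dots> = (\<Sum>j=1..k. of_nat ((n - j) choose (k - j)) * c (j - 1))"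
    by (simp add: sum.atLeast1_atMost_eq)
  finally show ?thesis .
qed

lemma binom_poly_sum_eq_falling_poly_sum:
  "(\<Sum>j<n. smult (c j) (binom_poly n j)) =
    (\<Sum>k\<le>n. smult (1 / fact k * (\<Sum>j=1..k. of_nat ((n - j) choose (k - j)) * c (j - 1)))
                   (falling_poly k))"
proof -
  have "(\<Sum>j<n. smult (c j) (binom_poly n j)) =
      (\<Sum>j<n. \<Sum>k\<le>n. smult (c j * of_nat ((n - j - 1) choose (n - k)) / fact k) (falling_poly k))"
    by (intro sum.cong refl)
       (simp add: binom_poly_falling_expansion poly_module.scale_sum_right mult.assoc)
  also have "\<dots> = (\<Sum>k\<le>n. smult (1 / fact k * (\<Sum>j<n. c j * of_nat ((n - j - 1) choose (n - k))))
                               (falling_poly k))"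
    by (subst sum.swap) (simp add: smult_sum sum_divide_distrib)
  also have "\<dots> = (\<Sum>k\<le>n. smult (1 / fact k * (\<Sum>j=1..k. of_nat ((n - j) choose (k - j)) * c (j - 1)))
                               (falling_poly k))"
    by (intro sum.cong refl) (simp only: atMost_iff sum_choose_reindex)
  finally show ?thesis .
qed

lemma sum_choose_above_eq_0:
  fixes c :: "nat \<Rightarrow> 'a::comm_semiring_1"
  assumes "n < k" and "\<And>j. n \<le> j \<Longrightarrow> c j = 0"
  shows "(\<Sum>j=1..k. of_nat ((n - j) choose (k - j)) * c (j - 1)) = 0"
proof (rule sum.neutral, intro ballI)
  fix j assume "j \<in> {1..k}"
  then show "of_nat ((n - j) choose (k - j)) * c (j - 1) = 0"
    using assms by (cases "j \<le> n") (auto simp: binomial_eq_0)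
qed

theorem theorem3p3:
  fixes P :: "nat \<Rightarrow> complex poly" and n k :: nat
  assumes "\<And>m. degree (P m) = m"
    and "P 0 = 1"
    and "\<And>m. m \<ge> 1 \<Longrightarrow> poly (P m) 0 = 0"
    and "1 \<le> n" and "1 \<le> k" and "k \<le> n"
  shows "S2 P n k = (1 / fact k) * (\<Sum>j=1..k. of_nat ((n - j) choose (k - j)) * eulerA P n (j - 1))"
proof -
  let ?A = "eulerA P n"
  have deg: "degree (P n) \<le> n"
    using assms(1) by simp
  have vanish: "?A j = 0" if "n \<le> j" for j
    using eulerA_eq_0_if_ge[of P n j] deg assms(3,4) that by simp
  have "P n = (\<Sum>j\<le>n. smult (?A j) (binom_poly n j))"
    by (rule eulerA_expansion(1)[of P n, OF deg])
  also have "\<dots> = (\<Sum>j<n. smult (?A j) (binom_poly n j))"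
    using vanish[of n] by (simp add: lessThan_Suc_atMost[symmetric])
  also have "\<dots> = (\<Sum>k\<le>n. smult (1 / fact k * (\<Sum>j=1..k. of_nat ((n - j) choose (k - j)) * ?A (j - 1)))
                                (falling_poly k))"
    by (rule binom_poly_sum_eq_falling_poly_sum)
  finally have "S2 P n = (\<lambda>k. 1 / fact k * (\<Sum>j=1..k. of_nat ((n - j) choose (k - j)) * ?A (j - 1)))"
    by (rule S2_eqI)
       (use sum_choose_above_eq_0[OF _ vanish] in auto)
  then show ?thesis
    by simp
qed

end
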